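(* Let $(\mathcal{A},E,\mathcal{B})$ be an operator-valued $C^*$-probability space and $\varphi$ a state on $\mathcal{A}$ with $\varphi=\varphi\circ E$. Let $B\in\mathcal{A}$ be a centered $\mathcal{B}$-valued Bernoulli element with variance map $\eta(b)=E[BbB]$. Then for every $n\in\mathbb{N}$, $\varphi(B^{2n})=\varphi(\eta(1)^n)$ and $\varphi(B^{2n+1})=0$. In particular, if $\mu_B$ and $\mu_{\eta(1)}$ denote the distributions of $B$ and of $\eta(1)$ with respect to $\varphi$, then $\mu_B$ is the unique symmetric probability measure on $\mathbb{R}$ whose push-forward under $t\mapsto t^2$ equals $\mu_{\eta(1)}$.
   Context: $(\mathcal{A},E,\mathcal{B})$: unital $C^*$-algebra, unital $C^*$-subalgebra $\mathcal{B}$, completely positive conditional expectation $E$. A centered $\mathcal{B}$-valued Bernoulli element with variance $\eta$ is $s=s^*\in\mathcal{A}$ with $E[b_0sb_1s\cdots sb_k]=b_0\eta(b_1)b_2\eta(b_3)\cdots\eta(b_{k-1})b_k$ for even $k$ and $0$ for odd $k$. *)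

theory Defs
  imports "HOL-Probability.Probability"
begin

class cstar_algebra = real_normed_algebra_1 + banach +
  fixes scaleC :: "complex \<Rightarrow> 'a \<Rightarrow> 'a"
    and cstar :: "'a \<Rightarrow> 'a"
  assumes scaleC_of_real: "scaleC (complex_of_real r) x = scaleR r x"
    and scaleC_add_left: "scaleC (a + b) x = scaleC a x + scaleC b x"
    and scaleC_add_right: "scaleC a (x + y) = scaleC a x + scaleC a y"
    and scaleC_scaleC: "scaleC a (scaleC b x) = scaleC (a * b) x"
    and scaleC_one: "scaleC 1 x = x"
    and scaleC_mult_left: "scaleC a (x * y) = scaleC a x * y"
    and scaleC_mult_right: "scaleC a (x * y) = x * scaleC a y"
    and norm_scaleC: "norm (scaleC a x) = cmod a * norm x"
    and cstar_cstar: "cstar (cstar x) = x"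
    and cstar_add: "cstar (x + y) = cstar x + cstar y"
    and cstar_mult: "cstar (x * y) = cstar y * cstar x"
    and cstar_scaleC: "cstar (scaleC a x) = scaleC (cnj a) (cstar x)"
    and cstar_identity: "norm (cstar x * x) = (norm x)\<^sup>2"

definition cpositive :: "'a::cstar_algebra \<Rightarrow> bool" where
  "cpositive x \<longleftrightarrow> (\<exists>y. x = cstar y * y)"

definition unital_cstar_subalgebra :: "'a::cstar_algebra set \<Rightarrow> bool" where
  "unital_cstar_subalgebra S \<longleftrightarrow>
     1 \<in> S \<and> closed S \<and>
     (\<forall>x\<in>S. \<forall>y\<in>S. x + y \<in> S \<and> x * y \<in> S) \<and>
     (\<forall>x\<in>S. cstar x \<in> S) \<and>
     (\<forall>c. \<forall>x\<in>S. scaleC c x \<in> S)"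

definition clinear_map :: "('a::cstar_algebra \<Rightarrow> 'b::cstar_algebra) \<Rightarrow> bool" where
  "clinear_map T \<longleftrightarrow> (\<forall>x y. T (x + y) = T x + T y) \<and> (\<forall>c x. T (scaleC c x) = scaleC c (T x))"

text \<open>Complete positivity: every amplification \<open>id_{M_n} \<otimes> T\<close> maps positive matrices
(i.e. matrices of the form \<open>Y* Y\<close> in \<open>M_n(A)\<close>) to positive matrices.
Matrices are functions \<open>nat \<Rightarrow> nat \<Rightarrow> 'a\<close> with indices \<open>< n\<close>.\<close>
definition completely_positive :: "('a::cstar_algebra \<Rightarrow> 'a) \<Rightarrow> bool" where
  "completely_positive T \<longleftrightarrow>
     (\<forall>(n::nat) (Y::nat \<Rightarrow> nat \<Rightarrow> 'a). \<exists>Z::nat \<Rightarrow> nat \<Rightarrow> 'a.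
        \<forall>i<n. \<forall>j<n. T (\<Sum>k<n. cstar (Y k i) * Y k j) = (\<Sum>k<n. cstar (Z k i) * Z k j))"

definition op_valued_cstar_prob_space :: "('a::cstar_algebra \<Rightarrow> 'a) \<Rightarrow> 'a set \<Rightarrow> bool" where
  "op_valued_cstar_prob_space E Bs \<longleftrightarrow>
     unital_cstar_subalgebra Bs \<and> clinear_map E \<and>
     (\<forall>x. E x \<in> Bs) \<and> (\<forall>b\<in>Bs. E b = b) \<and>
     (\<forall>b1\<in>Bs. \<forall>b2\<in>Bs. \<forall>x. E (b1 * x * b2) = b1 * E x * b2) \<and>
     completely_positive E"

definition cstate :: "('a::cstar_algebra \<Rightarrow> complex) \<Rightarrow> bool" where
  "cstate \<phi> \<longleftrightarrow>
     (\<forall>x y. \<phi> (x + y) = \<phi> x + \<phi> y) \<and> (\<forall>c x. \<phi> (scaleC c x) = c * \<phi> x) \<and>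
     (\<forall>y. \<phi> (cstar y * y) \<in> \<real> \<and> Re (\<phi> (cstar y * y)) \<ge> 0) \<and>
     \<phi> 1 = 1"

fun alt_word :: "'a::cstar_algebra \<Rightarrow> (nat \<Rightarrow> 'a) \<Rightarrow> nat \<Rightarrow> 'a" where
  "alt_word s b 0 = b 0"
| "alt_word s b (Suc k) = alt_word s b k * s * b (Suc k)"

fun bern_rhs :: "('a::cstar_algebra \<Rightarrow> 'a) \<Rightarrow> (nat \<Rightarrow> 'a) \<Rightarrow> nat \<Rightarrow> 'a" where
  "bern_rhs eta b 0 = b 0"
| "bern_rhs eta b (Suc 0) = 0"
| "bern_rhs eta b (Suc (Suc k)) = bern_rhs eta b k * eta (b (Suc k)) * b (Suc (Suc k))"

definition centered_bernoulli ::
    "('a::cstar_algebra \<Rightarrow> 'a) \<Rightarrow> 'a set \<Rightarrow> ('a \<Rightarrow> 'a) \<Rightarrow> 'a \<Rightarrow> bool" where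
  "centered_bernoulli E Bs eta s \<longleftrightarrow>
     cstar s = s \<and>
     (\<forall>k (b::nat \<Rightarrow> 'a). (\<forall>i\<le>k. b i \<in> Bs) \<longrightarrow>
        E (alt_word s b k) = (if even k then bern_rhs eta b k else 0))"

definition is_distribution :: "('a::cstar_algebra \<Rightarrow> complex) \<Rightarrow> 'a \<Rightarrow> real measure \<Rightarrow> bool" where
  "is_distribution \<phi> x \<mu> \<longleftrightarrow>
     prob_space \<mu> \<and> sets \<mu> = sets borel \<and>
     (\<exists>K. compact K \<and> emeasure \<mu> (UNIV - K) = 0) \<and>
     (\<forall>k::nat. integrable \<mu> (\<lambda>t. t ^ k) \<and>
        complex_of_real (\<integral>t. t ^ k \<partial>\<mu>) = \<phi> (x ^ k))"

definition symmetric_measure :: "real measure \<Rightarrow> bool" where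
  "symmetric_measure \<mu> \<longleftrightarrow> distr \<mu> borel uminus = \<mu>"

end

theory Submission
  imports Defs
begin

text \<open>Applying the Bernoulli identity to the constant word \<open>1, 1, \<dots>, 1\<close> gives
\<open>E(B\<^sup>2\<^sup>n) = \<eta>(1)\<^sup>n\<close> and \<open>E(B\<^sup>2\<^sup>n\<^sup>+\<^sup>1) = 0\<close>, and \<open>\<phi> = \<phi> \<circ> E\<close> transfers this to the moments
under \<open>\<phi>\<close>. Hence \<open>\<mu>\<^sub>B\<close> has vanishing odd moments and even moments equal to the moments of
\<open>\<mu>\<^sub>\<eta>\<^sub>(\<^sub>1\<^sub>)\<close>. Compactly supported distributions are determined by their moments (the Taylor
series of the characteristic function converges everywhere, and Levy's uniqueness theorem
applies), so \<open>\<mu>\<^sub>B\<close> coincides with its reflection, its square push-forward is \<open>\<mu>\<^sub>\<eta>\<^sub>(\<^sub>1\<^sub>)\<close>, and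
any other symmetric square root of \<open>\<mu>\<^sub>\<eta>\<^sub>(\<^sub>1\<^sub>)\<close> has the same moments as \<open>\<mu>\<^sub>B\<close>.\<close>

context real_distribution
begin

lemma integrable_power_if_AE_bounded:
  assumes "AE x in M. \<bar>x\<bar> \<le> R"
  shows "integrable M (\<lambda>x. x ^ k)"
proof (rule integrable_const_bound[where B = "R ^ k"])
  show "AE x in M. norm (x ^ k) \<le> R ^ k"
    using assms by eventually_elim (simp add: power_abs power_mono)
qed simp

lemma integral_abs_power_le_if_AE_bounded:
  assumes "AE x in M. \<bar>x\<bar> \<le> R"
  shows "(\<integral>x. \<bar>x\<bar> ^ k \<partial>M) \<le> \<bar>R\<bar> ^ k"
proof -
  have "integrable M (\<lambda>x. \<bar>x\<bar> ^ k)"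
    using integrable_abs[OF integrable_power_if_AE_bounded[OF assms, of k]] by (simp add: power_abs)
  then have "(\<integral>x. \<bar>x\<bar> ^ k \<partial>M) \<le> (\<integral>x. \<bar>R\<bar> ^ k \<partial>M)"
    using assms
    by (intro integral_mono_AE) (auto elim!: eventually_mono intro: power_mono simp: power_abs)
  then show ?thesis
    using prob_space by simp
qed

lemma char_minus_taylor_bound:
  assumes "AE x in M. \<bar>x\<bar> \<le> R"
  shows "cmod (char M t - (\<Sum>k \<le> n. ((\<i> * t) ^ k / fact k) * expectation (\<lambda>x. x ^ k)))
    \<le> 2 * (\<bar>t\<bar> * \<bar>R\<bar>) ^ n / fact n"
proof -
  have "cmod (char M t - (\<Sum>k \<le> n. ((\<i> * t) ^ k / fact k) * expectation (\<lambda>x. x ^ k)))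
      \<le> (2 * \<bar>t\<bar> ^ n / fact n) * expectation (\<lambda>x. \<bar>x\<bar> ^ n)"
    using char_approx1 integrable_power_if_AE_bounded[OF assms] by blast
  also have "\<dots> \<le> (2 * \<bar>t\<bar> ^ n / fact n) * \<bar>R\<bar> ^ n"
    using integral_abs_power_le_if_AE_bounded[OF assms] by (intro mult_left_mono) auto
  finally show ?thesis
    by (simp add: power_mult_distrib)
qed

end

theorem real_distribution_eq_if_bounded_moments_eq:
  assumes M1: "real_distribution M1" and M2: "real_distribution M2"
    and bounded1: "AE x in M1. \<bar>x\<bar> \<le> R" and bounded2: "AE x in M2. \<bar>x\<bar> \<le> R"
    and moments: "\<And>k::nat. (\<integral>x. x ^ k \<partial>M1) = (\<integral>x. x ^ k \<partial>M2)"
  shows "M1 = M2"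
proof (rule Levy_uniqueness[OF M1 M2], rule ext)
  fix t :: real
  define taylor where
    "taylor n = (\<Sum>k \<le> n. ((\<i> * t) ^ k / fact k) * complex_of_real (\<integral>x. x ^ k \<partial>M1))" for n
  have "cmod (char M1 t - char M2 t) \<le> 4 * ((\<bar>t\<bar> * \<bar>R\<bar>) ^ n / fact n)" for n
  proof -
    have "cmod (char M1 t - char M2 t) \<le> cmod (char M1 t - taylor n) + cmod (char M2 t - taylor n)"
      using norm_triangle_ineq4[of "char M1 t - taylor n" "char M2 t - taylor n"] by simp
    also have "\<dots> \<le> 4 * ((\<bar>t\<bar> * \<bar>R\<bar>) ^ n / fact n)"
      using real_distribution.char_minus_taylor_bound[OF M1 bounded1, of t n]
        real_distribution.char_minus_taylor_bound[OF M2 bounded2, of t n]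
      unfolding taylor_def moments by simp
    finally show ?thesis .
  qed
  moreover have "(\<lambda>n. inverse (fact n) * (\<bar>t\<bar> * \<bar>R\<bar>) ^ n) \<longlonglongrightarrow> (0::real)"
    by (rule summable_LIMSEQ_zero[OF summable_exp])
  from tendsto_mult_right_zero[OF this, of 4]
  have "(\<lambda>n. 4 * ((\<bar>t\<bar> * \<bar>R\<bar>) ^ n / fact n)) \<longlonglongrightarrow> (0::real)"
    by (simp add: divide_inverse mult_ac)
  ultimately have "cmod (char M1 t - char M2 t) \<le> 0"
    by (intro LIMSEQ_le_const) auto
  then show "char M1 t = char M2 t"
    by simp
qed

lemma is_distribution_bounded:
  assumes "is_distribution \<phi> x \<mu>"
  shows "real_distribution \<mu>" and "\<exists>R. AE t in \<mu>. \<bar>t\<bar> \<le> R"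
proof -
  from assms obtain K where "sets \<mu> = sets borel" "compact K" "emeasure \<mu> (UNIV - K) = 0"
    and "prob_space \<mu>"
    unfolding is_distribution_def by blast
  then show "real_distribution \<mu>"
    by (simp add: real_distribution_def real_distribution_axioms_def)
  obtain R where R: "\<forall>t\<in>K. \<bar>t\<bar> \<le> R"
    using compact_imp_bounded[OF \<open>compact K\<close>] unfolding bounded_real by blast
  have "UNIV - K \<in> null_sets \<mu>"
    using \<open>sets \<mu> = sets borel\<close> \<open>compact K\<close> \<open>emeasure \<mu> (UNIV - K) = 0\<close>
    by (auto simp: null_sets_def intro: borel_open compact_imp_closed)
  then have "AE t in \<mu>. \<bar>t\<bar> \<le> R"
    by (rule AE_I') (use R in auto)
  then show "\<exists>R. AE t in \<mu>. \<bar>t\<bar> \<le> R" ..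
qed

context real_distribution
begin

lemma integral_power_reflect: "(\<integral>x. x ^ k \<partial>distr M borel uminus) = (\<integral>x. (- x) ^ k \<partial>M)"
  by (rule integral_distr) simp_all

lemma integral_power_square: "(\<integral>x. x ^ k \<partial>distr M borel (\<lambda>t. t\<^sup>2)) = (\<integral>x. x ^ (2 * k) \<partial>M)"
  by (subst integral_distr) (simp_all add: power_mult)

lemma odd_moment_eq_0_if_symmetric:
  assumes "symmetric_measure M" and "odd k"
  shows "(\<integral>x. x ^ k \<partial>M) = 0"
proof -
  have "(\<integral>x. x ^ k \<partial>M) = (\<integral>x. (- x) ^ k \<partial>M)"
    using assms(1) integral_power_reflect unfolding symmetric_measure_def by metis
  also have "\<dots> = - (\<integral>x. x ^ k \<partial>M)"
    using \<open>odd k\<close> by simp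
  finally show ?thesis
    by simp
qed

lemma symmetric_if_odd_moments_eq_0:
  assumes bounded: "AE x in M. \<bar>x\<bar> \<le> R"
    and odd_moments: "\<And>k. odd k \<Longrightarrow> (\<integral>x. x ^ k \<partial>M) = 0"
  shows "symmetric_measure M"
  unfolding symmetric_measure_def
proof (rule real_distribution_eq_if_bounded_moments_eq)
  show "AE x in distr M borel uminus. \<bar>x\<bar> \<le> R"
    using bounded by (subst AE_distr_iff) simp_all
  show "(\<integral>x. x ^ k \<partial>distr M borel uminus) = (\<integral>x. x ^ k \<partial>M)" for k
    using odd_moments[of k] by (cases "even k") (simp_all add: integral_power_reflect)
qed (simp_all add: bounded real_distribution_axioms)

lemma distr_square_eq_if_even_moments_eq:
  assumes \<rho>: "real_distribution \<rho>"
    and bounded: "AE x in M. \<bar>x\<bar> \<le> R" and bounded\<rho>: "AE x in \<rho>. \<bar>x\<bar> \<le> R\<^sub>\<rho>"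
    and even_moments: "\<And>n. (\<integral>x. x ^ (2 * n) \<partial>M) = (\<integral>x. x ^ n \<partial>\<rho>)"
  shows "distr M borel (\<lambda>t. t\<^sup>2) = \<rho>"
proof (rule real_distribution_eq_if_bounded_moments_eq[where R = "max (R\<^sup>2) R\<^sub>\<rho>"])
  show "AE x in distr M borel (\<lambda>t. t\<^sup>2). \<bar>x\<bar> \<le> max (R\<^sup>2) R\<^sub>\<rho>"
    using bounded by (subst AE_distr_iff) (auto elim!: eventually_mono
        simp: max.coboundedI1 abs_le_square_iff[symmetric])
  show "AE x in \<rho>. \<bar>x\<bar> \<le> max (R\<^sup>2) R\<^sub>\<rho>"
    using bounded\<rho> by (auto elim!: eventually_mono)
qed (simp_all add: \<rho> integral_power_square even_moments)

end

text \<open>No boundedness of \<open>\<nu>\<close> is assumed: it is inherited from that of \<open>\<rho>\<close>.\<close>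

lemma symmetric_square_root_unique:
  assumes \<mu>: "real_distribution \<mu>" and \<nu>: "real_distribution \<nu>"
    and bounded\<mu>: "AE x in \<mu>. \<bar>x\<bar> \<le> R" and bounded\<rho>: "AE x in \<rho>. \<bar>x\<bar> \<le> R\<^sub>\<rho>"
    and symmetric\<mu>: "symmetric_measure \<mu>" and symmetric\<nu>: "symmetric_measure \<nu>"
    and square\<mu>: "distr \<mu> borel (\<lambda>t. t\<^sup>2) = \<rho>" and square\<nu>: "distr \<nu> borel (\<lambda>t. t\<^sup>2) = \<rho>"
  shows "\<nu> = \<mu>"
proof (rule real_distribution_eq_if_bounded_moments_eq[OF \<nu> \<mu>, where R = "max (sqrt R\<^sub>\<rho>) R"])
  interpret \<nu>: real_distribution \<nu> by (rule \<nu>)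
  interpret \<mu>: real_distribution \<mu> by (rule \<mu>)
  have "AE x in \<nu>. \<bar>x\<^sup>2\<bar> \<le> R\<^sub>\<rho>"
    using bounded\<rho> unfolding square\<nu>[symmetric] by (subst (asm) AE_distr_iff) simp_all
  then show "AE x in \<nu>. \<bar>x\<bar> \<le> max (sqrt R\<^sub>\<rho>) R"
    by eventually_elim (metis abs_power2 real_sqrt_abs real_sqrt_le_mono max.coboundedI1)
  show "AE x in \<mu>. \<bar>x\<bar> \<le> max (sqrt R\<^sub>\<rho>) R"
    using bounded\<mu> by (auto elim!: eventually_mono)
  show "(\<integral>x. x ^ k \<partial>\<nu>) = (\<integral>x. x ^ k \<partial>\<mu>)" for k
  proof (cases "even k")
    case True
    then obtain n where "k = 2 * n" by blast
    then show ?thesis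
      using \<nu>.integral_power_square[of n] \<mu>.integral_power_square[of n] square\<mu> square\<nu> by simp
  qed (simp add: \<nu>.odd_moment_eq_0_if_symmetric[OF symmetric\<nu>]
        \<mu>.odd_moment_eq_0_if_symmetric[OF symmetric\<mu>])
qed

lemma symmetric_square_root_by_moments:
  assumes \<mu>: "real_distribution \<mu>" and \<rho>: "real_distribution \<rho>"
    and bounded\<mu>: "AE x in \<mu>. \<bar>x\<bar> \<le> R" and bounded\<rho>: "AE x in \<rho>. \<bar>x\<bar> \<le> R\<^sub>\<rho>"
    and odd_moments: "\<And>k. odd k \<Longrightarrow> (\<integral>x. x ^ k \<partial>\<mu>) = 0"
    and even_moments: "\<And>n. (\<integral>x. x ^ (2 * n) \<partial>\<mu>) = (\<integral>x. x ^ n \<partial>\<rho>)"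
  shows "symmetric_measure \<mu> \<and> distr \<mu> borel (\<lambda>t. t\<^sup>2) = \<rho> \<and>
    (\<forall>\<nu>. prob_space \<nu> \<and> sets \<nu> = sets borel \<and> symmetric_measure \<nu> \<and>
      distr \<nu> borel (\<lambda>t. t\<^sup>2) = \<rho> \<longrightarrow> \<nu> = \<mu>)"
proof -
  have symmetric: "symmetric_measure \<mu>"
    by (rule real_distribution.symmetric_if_odd_moments_eq_0[OF \<mu> bounded\<mu> odd_moments])
  moreover have square: "distr \<mu> borel (\<lambda>t. t\<^sup>2) = \<rho>"
    by (rule real_distribution.distr_square_eq_if_even_moments_eq[OF \<mu> \<rho> bounded\<mu> bounded\<rho> even_moments])
  ultimately show ?thesis
    using symmetric_square_root_unique[OF \<mu> _ bounded\<mu> bounded\<rho> symmetric _ square]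
    by (auto simp: real_distribution_def real_distribution_axioms_def)
qed

lemma symmetric_square_root_distribution:
  assumes distribution\<mu>: "is_distribution \<phi> x \<mu>" and distribution\<rho>: "is_distribution \<phi> y \<rho>"
    and even_moments: "\<And>n. \<phi> (x ^ (2 * n)) = \<phi> (y ^ n)"
    and odd_moments: "\<And>n. \<phi> (x ^ (2 * n + 1)) = 0"
  shows "symmetric_measure \<mu> \<and> distr \<mu> borel (\<lambda>t. t\<^sup>2) = \<rho> \<and>
    (\<forall>\<nu>. prob_space \<nu> \<and> sets \<nu> = sets borel \<and> symmetric_measure \<nu> \<and>
      distr \<nu> borel (\<lambda>t. t\<^sup>2) = \<rho> \<longrightarrow> \<nu> = \<mu>)"
proof -
  obtain R R\<^sub>\<rho> where bounded\<mu>: "AE t in \<mu>. \<bar>t\<bar> \<le> R" and bounded\<rho>: "AE t in \<rho>. \<bar>t\<bar> \<le> R\<^sub>\<rho>"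
    using is_distribution_bounded(2)[OF distribution\<mu>] is_distribution_bounded(2)[OF distribution\<rho>]
    by blast
  from distribution\<mu> distribution\<rho> have moment\<mu>: "complex_of_real (\<integral>t. t ^ k \<partial>\<mu>) = \<phi> (x ^ k)"
    and moment\<rho>: "complex_of_real (\<integral>t. t ^ k \<partial>\<rho>) = \<phi> (y ^ k)" for k
    unfolding is_distribution_def by blast+
  show ?thesis
  proof (rule symmetric_square_root_by_moments[OF _ _ bounded\<mu> bounded\<rho>])
    show "(\<integral>t. t ^ k \<partial>\<mu>) = 0" if "odd k" for k
      using that moment\<mu>[of k] odd_moments by (auto elim!: oddE)
    show "(\<integral>t. t ^ (2 * n) \<partial>\<mu>) = (\<integral>t. t ^ n \<partial>\<rho>)" for n
      using moment\<mu>[of "2 * n"] moment\<rho>[of n] even_moments[of n] of_real_eq_iff by metis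
  qed (use distribution\<mu> distribution\<rho> is_distribution_bounded(1) in blast)+
qed

lemma alt_word_const_one: "alt_word s (\<lambda>_. 1) k = s ^ k"
  by (induction k) (simp_all add: power_commutes)

lemma bern_rhs_const_one: "bern_rhs eta (\<lambda>_. 1) (2 * n) = eta 1 ^ n"
  by (induction n) (simp_all add: power_commutes)

lemma centered_bernoulli_power:
  assumes "centered_bernoulli E Bs eta s" and "1 \<in> Bs"
  shows "E (s ^ (2 * n)) = eta 1 ^ n" and "E (s ^ (2 * n + 1)) = 0"
proof -
  have "E (s ^ k) = (if even k then bern_rhs eta (\<lambda>_. 1) k else 0)" for k
    using assms(1)[unfolded centered_bernoulli_def, THEN conjunct2, rule_format, of k "\<lambda>_. 1"]
      assms(2) by (simp add: alt_word_const_one)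
  from this[of "2 * n"] this[of "2 * n + 1"] show "E (s ^ (2 * n)) = eta 1 ^ n" "E (s ^ (2 * n + 1)) = 0"
    by (simp_all add: bern_rhs_const_one)
qed

lemma cstate_zero: "cstate \<phi> \<Longrightarrow> \<phi> 0 = 0"
  unfolding cstate_def by (metis add_cancel_right_right)

theorem lemma5p1:
  fixes E :: "'a::cstar_algebra \<Rightarrow> 'a" and Bs :: "'a set"
    and \<phi> :: "'a \<Rightarrow> complex" and B :: 'a
  assumes "op_valued_cstar_prob_space E Bs"
    and "cstate \<phi>"
    and "\<forall>x. \<phi> x = \<phi> (E x)"
    and "centered_bernoulli E Bs (\<lambda>b. E (B * b * B)) B"
  shows "(\<forall>n::nat. \<phi> (B ^ (2 * n)) = \<phi> ((E (B * 1 * B)) ^ n) \<and> \<phi> (B ^ (2 * n + 1)) = 0)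
    \<and> (\<forall>\<mu>B \<mu>\<eta>. is_distribution \<phi> B \<mu>B \<longrightarrow> is_distribution \<phi> (E (B * 1 * B)) \<mu>\<eta> \<longrightarrow>
         symmetric_measure \<mu>B \<and> distr \<mu>B borel (\<lambda>t. t\<^sup>2) = \<mu>\<eta> \<and>
         (\<forall>\<nu>. prob_space \<nu> \<and> sets \<nu> = sets borel \<and> symmetric_measure \<nu> \<and>
               distr \<nu> borel (\<lambda>t. t\<^sup>2) = \<mu>\<eta> \<longrightarrow> \<nu> = \<mu>B))"
proof -
  have "1 \<in> Bs"
    using assms(1) by (simp add: op_valued_cstar_prob_space_def unital_cstar_subalgebra_def)
  then have moments: "\<phi> (B ^ (2 * n)) = \<phi> ((E (B * 1 * B)) ^ n)" "\<phi> (B ^ (2 * n + 1)) = 0" for n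
    using centered_bernoulli_power[OF assms(4)] assms(3) cstate_zero[OF assms(2)] by metis+
  then show ?thesis
    using symmetric_square_root_distribution by blast
qed

end
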